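(* For every integer $i>0$, every normal proof of $\varphi_i$ in Prawitz-style Natural Deduction for $\mathbf{M}_{\rightarrow}$ contains at least $2^i$ assumption occurrences of the formula $\xi_i$.
   Context: $\mathbf{M}_{\rightarrow}$ is purely implicational minimal propositional logic: formulas are built from propositional letters using only $\rightarrow$; there is no $\bot$. Its Natural Deduction system (Prawitz style) has only two rules: $\rightarrow$-Introduction (from a derivation of $\beta$, possibly using assumptions $\alpha$, infer $\alpha\rightarrow\beta$, discharging any number, possibly zero, of occurrences of the assumption $\alpha$) and $\rightarrow$-Elimination (from $\alpha$ and $\alpha\rightarrow\beta$ infer $\beta$; $\alpha\rightarrow\beta$ is the major premise, $\alpha$ the minor premise). A proof is a derivation with no open assumptions. A derivation is normal if no formula occurrence is both the conclusion of an $\rightarrow$-Introduction and the major premise of an $\rightarrow$-Elimination. An assumption occurrence is a leaf (top-formula occurrence) of the derivation tree. For formulas $X,Y$ let $\chi[X,Y]=(((X\rightarrow Y)\rightarrow X)\rightarrow X)\rightarrow Y$. Let $C$ and $D_1,D_2,\dots$ be distinct propositional letters. Define $\xi_1=\chi[D_1,C]$, $\xi_{i+1}=\chi[D_{i+1},\xi_i]$ for $i\ge 1$, and $\varphi_i=\xi_i\rightarrow C$ for $i\ge 1$. *)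

theory Defs
  imports Main
begin

datatype form = Atom nat | Imp form form  (infixr "\<rightarrow>\<^sub>f" 55)

definition C :: form where "C = Atom 0"
definition D :: "nat \<Rightarrow> form" where "D i = Atom i"

definition chi :: "form \<Rightarrow> form \<Rightarrow> form" where
  "chi X Y = ((((X \<rightarrow>\<^sub>f Y) \<rightarrow>\<^sub>f X) \<rightarrow>\<^sub>f X) \<rightarrow>\<^sub>f Y)"

fun xi :: "nat \<Rightarrow> form" where
  "xi 0 = C" (* unused; the statement only concerns i > 0 *)
| "xi (Suc 0) = chi (D 1) C"
| "xi (Suc (Suc n)) = chi (D (Suc (Suc n))) (xi (Suc n))"

definition phi :: "nat \<Rightarrow> form" where
  "phi i = (xi i \<rightarrow>\<^sub>f C)"

text \<open>Assumption leaves carry a discharge label. ImpI x a d concludes a -> (concl d),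
  discharging exactly the open leaves Assm x a of d (any number, possibly zero, of
  occurrences of a, since labels can be chosen freely). ImpE d1 d2 has minor premise d1
  and major premise d2.\<close>

datatype deriv = Assm nat form | ImpI nat form deriv | ImpE deriv deriv

fun concl :: "deriv \<Rightarrow> form" where
  "concl (Assm x a) = a"
| "concl (ImpI x a d) = (a \<rightarrow>\<^sub>f concl d)"
| "concl (ImpE d1 d2) = (case concl d2 of Imp a b \<Rightarrow> b | Atom n \<Rightarrow> Atom n)"

fun wf :: "deriv \<Rightarrow> bool" where
  "wf (Assm x a) = True"
| "wf (ImpI x a d) = wf d"
| "wf (ImpE d1 d2) = (wf d1 \<and> wf d2 \<and> (\<exists>b. concl d2 = (concl d1 \<rightarrow>\<^sub>f b)))"

fun open_assms :: "deriv \<Rightarrow> (nat \<times> form) set" where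
  "open_assms (Assm x a) = {(x, a)}"
| "open_assms (ImpI x a d) = open_assms d - {(x, a)}"
| "open_assms (ImpE d1 d2) = open_assms d1 \<union> open_assms d2"

definition is_proof_of :: "deriv \<Rightarrow> form \<Rightarrow> bool" where
  "is_proof_of d a \<longleftrightarrow> wf d \<and> open_assms d = {} \<and> concl d = a"

fun normal :: "deriv \<Rightarrow> bool" where
  "normal (Assm x a) = True"
| "normal (ImpI x a d) = normal d"
| "normal (ImpE d1 d2) = (normal d1 \<and> normal d2 \<and> (\<forall>x a d. d2 \<noteq> ImpI x a d))"

fun assm_count :: "form \<Rightarrow> deriv \<Rightarrow> nat" where
  "assm_count a (Assm x b) = (if b = a then 1 else 0)"
| "assm_count a (ImpI x b d) = assm_count a d"
| "assm_count a (ImpE d1 d2) = assm_count a d1 + assm_count a d2"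

end

theory Submission
  imports Defs
begin

text \<open>
  Writing \<open>E\<^sub>k = D\<^sub>k \<rightarrow> \<xi>\<^sub>k\<^sub>-\<^sub>1\<close>, \<open>B\<^sub>k = E\<^sub>k \<rightarrow> D\<^sub>k\<close> and \<open>A\<^sub>k = B\<^sub>k \<rightarrow> D\<^sub>k\<close>, we have
  \<open>\<xi>\<^sub>k = A\<^sub>k \<rightarrow> \<xi>\<^sub>k\<^sub>-\<^sub>1\<close> (with \<open>\<xi>\<^sub>0 = C\<close>) and \<open>\<phi>\<^sub>i = \<xi>\<^sub>i \<rightarrow> C\<close>.  The proof is a potential
  argument.  Every formula that can be a conclusion inside a normal proof of \<open>\<phi>\<^sub>i\<close> is
  named by a goal label, and to each label and each set \<open>G\<close> of hypotheses we assign a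
  weight, essentially \<open>2\<close> to the number of levels \<open>k\<close> above the goal for which neither
  \<open>A\<^sub>k\<close> nor \<open>D\<^sub>k\<close> is a hypothesis yet.  The main lemma says that a normal derivation
  from hypotheses in \<open>G\<close> has at least as many leaves \<open>\<xi>\<^sub>i\<close> as the weight of its conclusion.

  Leaves are handled by a direct check;
  for an introduction the weight does not decrease when the discharged hypothesis is
  added to \<open>G\<close>; for an elimination, normality implies that the major premise is a
  right end-segment (tail) of an open hypothesis, which leaves only a few shapes of
  major premise, and for each the weight of the conclusion is at most the sum of the
  weights of the two premises.  The theorem is the instance \<open>G = {}\<close>, goal \<open>\<phi>\<^sub>i\<close>.
\<close>

definition Ef :: "nat \<Rightarrow> form" where "Ef k = (D k \<rightarrow>\<^sub>f xi (k - 1))"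
definition Bf :: "nat \<Rightarrow> form" where "Bf k = (Ef k \<rightarrow>\<^sub>f D k)"
definition Af :: "nat \<Rightarrow> form" where "Af k = (Bf k \<rightarrow>\<^sub>f D k)"

lemma xi_Suc: "xi (Suc n) = (Af (Suc n) \<rightarrow>\<^sub>f xi n)"
  by (cases n) (simp_all add: chi_def Af_def Bf_def Ef_def)

lemma xi_eq_Atom: "(xi m = Atom n) \<longleftrightarrow> (m = 0 \<and> n = 0)"
  by (cases m) (auto simp: xi_Suc C_def)

lemma xi_eq_Imp: "(xi m = (a \<rightarrow>\<^sub>f b)) \<longleftrightarrow> (m \<noteq> 0 \<and> a = Af m \<and> b = xi (m - 1))"
  by (cases m) (auto simp: xi_Suc C_def)

lemma xi_inj: "(xi m = xi n) \<longleftrightarrow> m = n"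
proof (induction m arbitrary: n)
  case 0
  then show ?case by (cases n) (auto simp: xi_Suc C_def)
next
  case (Suc m)
  then show ?case by (cases n) (auto simp: xi_Suc C_def Af_def Bf_def Ef_def D_def)
qed

lemma Atom_eq_xi: "(Atom n = xi m) \<longleftrightarrow> (m = 0 \<and> n = 0)"
  using xi_eq_Atom by metis

lemma Imp_eq_xi: "((a \<rightarrow>\<^sub>f b) = xi m) \<longleftrightarrow> (m \<noteq> 0 \<and> a = Af m \<and> b = xi (m - 1))"
  using xi_eq_Imp by metis

lemmas form_simps = Af_def Bf_def Ef_def D_def C_def phi_def
  xi_inj xi_eq_Atom Atom_eq_xi xi_eq_Imp Imp_eq_xi

lemma form_eqs [simp]:
  "Af j = Af k \<longleftrightarrow> j = k" "Bf j = Bf k \<longleftrightarrow> j = k" "Ef j = Ef k \<longleftrightarrow> j = k" "D j = D k \<longleftrightarrow> j = k"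
  "Af j \<noteq> Bf k" "Af j \<noteq> Ef k" "Af j \<noteq> D k" "Bf j \<noteq> Ef k" "Bf j \<noteq> D k" "Ef j \<noteq> D k"
  "Bf k \<noteq> Af j" "Ef k \<noteq> Af j" "D k \<noteq> Af j" "Ef k \<noteq> Bf j" "D k \<noteq> Bf j" "D k \<noteq> Ef j"
  "xi m \<noteq> Af k" "xi m \<noteq> Bf k" "xi m \<noteq> Ef k" "Af k \<noteq> xi m" "Bf k \<noteq> xi m" "Ef k \<noteq> xi m"
  "xi m = D k \<longleftrightarrow> m = 0 \<and> k = 0" "D k \<noteq> (a \<rightarrow>\<^sub>f b)"
  by (simp_all add: form_simps) auto

section \<open>Hypothesis sets and weights\<close>

text \<open>The formulas that can ever be assumed in a normal proof of \<open>\<phi>\<^sub>i\<close>.\<close>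

definition hyps :: "nat \<Rightarrow> form set" where
  "hyps i = insert (xi i) (\<Union>k\<in>{1..i}. {Af k, Bf k, Ef k, D k})"

text \<open>Hypothesis sets arising in such a proof: \<open>E\<^sub>k\<close> is only discharged inside a proof of
  \<open>B\<^sub>k\<close>, which occurs only as the minor premise of \<open>A\<^sub>k\<close>; likewise \<open>D\<^sub>k\<close> only inside a proof
  of \<open>E\<^sub>k\<close>, the minor premise of \<open>B\<^sub>k\<close>.\<close>

definition admissible :: "nat \<Rightarrow> form set \<Rightarrow> bool" where
  "admissible i G \<longleftrightarrow> G \<subseteq> hyps i \<and> (\<forall>k. Ef k \<in> G \<longrightarrow> Af k \<in> G) \<and> (\<forall>k. D k \<in> G \<longrightarrow> Bf k \<in> G)"

text \<open>The number of levels \<open>k\<close> with \<open>m < k \<le> i\<close> at which neither \<open>A\<^sub>k\<close> nor \<open>D\<^sub>k\<close> has been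
  assumed; each such level doubles the cost of proving \<open>\<xi>\<^sub>m\<close>.\<close>

definition free_levels :: "nat \<Rightarrow> form set \<Rightarrow> nat \<Rightarrow> nat" where
  "free_levels i G m = card {k. m < k \<and> k \<le> i \<and> Af k \<notin> G \<and> D k \<notin> G}"

text \<open>With both \<open>E\<^sub>k\<close> and \<open>B\<^sub>k\<close> assumed, \<open>D\<^sub>k\<close> and hence much else is cheap; no bound is claimed.\<close>

definition degenerate :: "form set \<Rightarrow> bool" where
  "degenerate G \<longleftrightarrow> (\<exists>k. Ef k \<in> G \<and> Bf k \<in> G)"

text \<open>Labels of the formulas that can be conclusions in a normal proof of \<open>\<phi>\<^sub>i\<close>.\<close>

datatype goal = GXi nat | GA nat | GB nat | GE nat | GD nat | GPhi

fun goal_form :: "nat \<Rightarrow> goal \<Rightarrow> form" where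
  "goal_form i (GXi m) = xi m"
| "goal_form i (GA k) = Af k"
| "goal_form i (GB k) = Bf k"
| "goal_form i (GE k) = Ef k"
| "goal_form i (GD k) = D k"
| "goal_form i GPhi = phi i"

fun goal_ok :: "nat \<Rightarrow> goal \<Rightarrow> bool" where
  "goal_ok i (GXi m) = (m \<le> i)"
| "goal_ok i GPhi = True"
| "goal_ok i (GA k) = (1 \<le> k \<and> k \<le> i)"
| "goal_ok i (GB k) = (1 \<le> k \<and> k \<le> i)"
| "goal_ok i (GE k) = (1 \<le> k \<and> k \<le> i)"
| "goal_ok i (GD k) = (1 \<le> k \<and> k \<le> i)"

fun prem :: "nat \<Rightarrow> goal \<Rightarrow> goal" where
  "prem i (GXi m) = GA m"
| "prem i (GA k) = GB k"
| "prem i (GB k) = GE k"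
| "prem i (GE k) = GD k"
| "prem i (GD k) = GD k"
| "prem i GPhi = GXi i"

fun body :: "goal \<Rightarrow> goal" where
  "body (GXi m) = GXi (m - 1)"
| "body (GA k) = GD k"
| "body (GB k) = GD k"
| "body (GE k) = GXi (k - 1)"
| "body (GD k) = GD k"
| "body GPhi = GXi 0"

text \<open>The weight of a goal under hypotheses \<open>G\<close>: a lower bound for the number of leaves \<open>\<xi>\<^sub>i\<close>
  in a normal derivation of the goal from \<open>G\<close>.  The value \<open>2\<^sup>i\<close> bounds all other weights;
  it is given to \<open>B\<^sub>k\<close>, and to \<open>D\<^sub>k\<close> while \<open>B\<^sub>k\<close> is not assumed, since their normal proofs
  must pass through further goals of level \<open>k\<close> before any leaf \<open>\<xi>\<^sub>i\<close> is reached.\<close>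

fun weight :: "nat \<Rightarrow> form set \<Rightarrow> goal \<Rightarrow> nat" where
  "weight i G (GXi m) = (if degenerate G then 0 else 2 ^ free_levels i G m)"
| "weight i G GPhi = (if degenerate G then 0 else 2 ^ free_levels i G 0)"
| "weight i G (GA k) = (if degenerate G \<or> Af k \<in> G \<or> D k \<in> G then 0 else 2 ^ free_levels i G k)"
| "weight i G (GD k) = (if degenerate G \<or> D k \<in> G \<or> (Bf k \<in> G \<and> Af k \<in> G) then 0
      else if Bf k \<in> G then 2 ^ free_levels i G k else 2 ^ i)"
| "weight i G (GB k) = (if degenerate G \<or> Bf k \<in> G \<or> Af k \<notin> G then 0 else 2 ^ i)"
| "weight i G (GE k) = (if degenerate G \<or> Ef k \<in> G \<or> Bf k \<notin> G then 0 else 2 ^ free_levels i G k)"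

lemma goal_form_inj:
  assumes "goal_ok i g" "goal_ok i g'" "goal_form i g = goal_form i g'"
  shows "g = g'"
  using assms by (cases g; cases g'; simp add: form_simps)

lemma goal_form_Imp:
  assumes "goal_ok i g" "goal_form i g = (a \<rightarrow>\<^sub>f c)"
  shows "goal_ok i (prem i g) \<and> goal_form i (prem i g) = a \<and> goal_ok i (body g) \<and> goal_form i (body g) = c"
  using assms by (cases g; simp add: form_simps) linarith

lemma hyps_goal:
  assumes "h \<in> hyps i"
  obtains g where "goal_ok i g" "goal_form i g = h"
proof -
  consider "h = xi i" | k where "1 \<le> k" "k \<le> i" "h = Af k \<or> h = Bf k \<or> h = Ef k \<or> h = D k"
    using assms unfolding hyps_def by auto
  then show ?thesis
  proof cases
    case 1
    then show ?thesis using that[of "GXi i"] by simp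
  next
    case 2
    then show ?thesis using that[of "GA k"] that[of "GB k"] that[of "GE k"] that[of "GD k"] by fastforce
  qed
qed

lemma free_levels_le: "free_levels i G m \<le> i"
proof -
  have "{k. m < k \<and> k \<le> i \<and> Af k \<notin> G \<and> D k \<notin> G} \<subseteq> {1..i}" by auto
  then have "free_levels i G m \<le> card {1..i}" unfolding free_levels_def by (intro card_mono) auto
  then show ?thesis by simp
qed

lemma free_levels_top: "free_levels i G i = 0"
  unfolding free_levels_def by simp

lemma free_levels_empty: "free_levels i {} 0 = i"
proof -
  have "{k. 0 < k \<and> k \<le> i \<and> Af k \<notin> {} \<and> D k \<notin> {}} = {1..i}" by auto
  then show ?thesis unfolding free_levels_def by simp
qed

lemma free_levels_pred:
  assumes "1 \<le> m" "m \<le> i"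
  shows "free_levels i G (m - 1) = free_levels i G m + (if Af m \<notin> G \<and> D m \<notin> G then 1 else 0)"
proof -
  let ?S = "{k. m < k \<and> k \<le> i \<and> Af k \<notin> G \<and> D k \<notin> G}"
  have fin: "finite ?S" by (rule finite_subset[of _ "{..i}"]) auto
  have "m - 1 < k \<longleftrightarrow> k = m \<or> m < k" for k
    using assms by auto
  then have "{k. m - 1 < k \<and> k \<le> i \<and> Af k \<notin> G \<and> D k \<notin> G}
      = (if Af m \<notin> G \<and> D m \<notin> G then insert m ?S else ?S)"
    using assms by auto
  then show ?thesis using fin unfolding free_levels_def by simp
qed

lemma free_levels_insert:
  assumes "\<And>k. m < k \<Longrightarrow> a \<noteq> Af k \<and> a \<noteq> D k"
  shows "free_levels i (insert a G) m = free_levels i G m"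
proof -
  have "{k. m < k \<and> k \<le> i \<and> Af k \<notin> insert a G \<and> D k \<notin> insert a G}
      = {k. m < k \<and> k \<le> i \<and> Af k \<notin> G \<and> D k \<notin> G}"
    using assms by blast
  then show ?thesis unfolding free_levels_def by simp
qed

lemma degenerate_insert:
  "degenerate (insert a G) \<longleftrightarrow>
     degenerate G \<or> (\<exists>k. a = Ef k \<and> Bf k \<in> G) \<or> (\<exists>k. a = Bf k \<and> Ef k \<in> G)"
  unfolding degenerate_def by (auto simp: form_simps)

section \<open>Normal derivations end in a hypothesis\<close>

text \<open>\<open>tail h F\<close>: \<open>F\<close> arises from \<open>h\<close> by stripping premises, \<open>h = a\<^sub>1 \<rightarrow> \<dots> \<rightarrow> a\<^sub>n \<rightarrow> F\<close>.\<close>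

inductive tail :: "form \<Rightarrow> form \<Rightarrow> bool" where
  tail_refl: "tail h h"
| tail_step: "tail h (a \<rightarrow>\<^sub>f b) \<Longrightarrow> tail h b"

text \<open>In a normal derivation not ending with an introduction, the main branch consists of
  eliminations only, so the conclusion is a tail of an open assumption.\<close>

lemma normal_concl_tail:
  "wf d \<Longrightarrow> normal d \<Longrightarrow> (\<forall>x a d'. d \<noteq> ImpI x a d') \<Longrightarrow> \<exists>(x, h) \<in> open_assms d. tail h (concl d)"
proof (induction d)
  case (Assm x a)
  then show ?case by (auto intro: tail_refl)
next
  case (ImpI x a d)
  then show ?case by simp
next
  case (ImpE d1 d2)
  then obtain b where b: "concl d2 = (concl d1 \<rightarrow>\<^sub>f b)" by auto
  from ImpE obtain x h where "(x, h) \<in> open_assms d2" "tail h (concl d2)" by auto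
  then show ?case using b by (auto intro: tail_step)
qed

lemma tail_of_hyp:
  "tail h F \<Longrightarrow> h \<in> hyps i \<Longrightarrow> F = h \<or> (\<exists>m\<le>i. F = xi m) \<or> (\<exists>k. F = D k)"
proof (induction rule: tail.induct)
  case (tail_refl h)
  then show ?case by simp
next
  case (tail_step h a b)
  then consider "(a \<rightarrow>\<^sub>f b) = h" | m where "m \<le> i" "(a \<rightarrow>\<^sub>f b) = xi m"
    by (auto simp: D_def)
  then show ?case
  proof cases
    case 1
    from tail_step.prems consider "h = xi i" | k where "k \<le> i" "h \<in> {Af k, Bf k, Ef k, D k}"
      unfolding hyps_def by auto
    then show ?thesis
    proof cases
      case 1
      then show ?thesis using \<open>(a \<rightarrow>\<^sub>f b) = h\<close> by (metis Imp_eq_xi diff_le_self)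
    next
      case 2
      then have "b = D k \<or> b = xi (k - 1)"
        using \<open>(a \<rightarrow>\<^sub>f b) = h\<close> by (auto simp: Af_def Bf_def Ef_def D_def)
      then show ?thesis using \<open>k \<le> i\<close> by (metis diff_le_self order_trans)
    qed
  next
    case 2
    then show ?thesis by (metis Imp_eq_xi diff_le_self order_trans)
  qed
qed

lemma major_premise_goal:
  assumes "admissible i G" "h \<in> G" "tail h (a \<rightarrow>\<^sub>f b)"
  obtains g where "goal_ok i g" "goal_form i g = (a \<rightarrow>\<^sub>f b)" "(\<exists>m. g = GXi m) \<or> goal_form i g \<in> G"
proof -
  have "h \<in> hyps i" using assms(1,2) by (auto simp: admissible_def)
  then consider "(a \<rightarrow>\<^sub>f b) = h" | m where "m \<le> i" "(a \<rightarrow>\<^sub>f b) = xi m"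
    using tail_of_hyp[OF assms(3)] by (auto simp: D_def)
  then show ?thesis
  proof cases
    case 1
    then show ?thesis using hyps_goal[OF \<open>h \<in> hyps i\<close>] that assms(2) by metis
  next
    case 2
    then show ?thesis using that[of "GXi m"] by simp
  qed
qed

section \<open>The weight inequalities\<close>

lemma weight_assm:
  assumes "0 < i" "admissible i G" "h \<in> G" "goal_ok i g" "goal_form i g = h"
  shows "weight i G g \<le> assm_count (xi i) (Assm x h)"
proof -
  have hyp: "h \<in> hyps i" using assms(2,3) by (auto simp: admissible_def)
  show ?thesis
  proof (cases g)
    case (GXi m)
    then have "m = i" using hyp assms(5) unfolding hyps_def by (auto simp: form_simps)
    then show ?thesis using GXi assms(5) by (simp add: free_levels_top)
  next
    case GPhi
    then show ?thesis using hyp assms(1,5) unfolding hyps_def by (auto simp: form_simps)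
  qed (use assms(3,5) in auto)
qed

lemma weight_intro:
  assumes "admissible i G" "goal_ok i g" "goal_form i g = (a \<rightarrow>\<^sub>f c)"
  shows "weight i G g \<le> weight i (insert a G) (body g)"
proof (cases g)
  case (GXi m)
  then have m: "1 \<le> m" "m \<le> i" "a = Af m" using assms(2,3) by (auto simp: xi_eq_Imp)
  have "free_levels i (insert a G) (m - 1) = free_levels i G m"
    using free_levels_pred[OF m(1,2), of "insert a G"] free_levels_insert[of m a i G] m(3) by simp
  then show ?thesis using GXi m by (simp add: degenerate_insert)
next
  case (GA k)
  then have k: "a = Bf k" using assms(3) by (simp add: Af_def)
  have "Ef k \<in> G \<Longrightarrow> Af k \<in> G" using assms(1) by (simp add: admissible_def)
  then show ?thesis using GA k free_levels_insert[of k a i G] by (auto simp: degenerate_insert)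
next
  case (GB k)
  then have k: "a = Ef k" using assms(3) by (simp add: Bf_def)
  have "D k \<in> G \<Longrightarrow> Bf k \<in> G" using assms(1) by (simp add: admissible_def)
  then show ?thesis using GB k by (auto simp: degenerate_insert)
next
  case (GE k)
  then have k: "1 \<le> k" "k \<le> i" "a = D k" using assms(2,3) by (auto simp: Ef_def)
  have "free_levels i (insert a G) (k - 1) = free_levels i G k"
    using free_levels_pred[OF k(1,2), of "insert a G"] free_levels_insert[of k a i G] k(3) by simp
  then show ?thesis using GE k by (simp add: degenerate_insert)
next
  case (GD k)
  then show ?thesis using assms(3) by simp
next
  case GPhi
  then have "a = xi i" using assms(3) by (simp add: phi_def)
  then show ?thesis using GPhi free_levels_insert[of 0 a i G] by (simp add: degenerate_insert)
qed

lemma admissible_intro: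
  assumes "0 < i" "admissible i G" "goal_ok i g" "goal_form i g = (a \<rightarrow>\<^sub>f c)" "0 < weight i G g"
  shows "admissible i (insert a G)"
proof -
  have a: "a = goal_form i (prem i g)" and prem_ok: "goal_ok i (prem i g)"
    using goal_form_Imp[OF assms(3,4)] by auto
  have "a \<in> hyps i" using a prem_ok unfolding hyps_def by (cases g) auto
  moreover have "Af k \<in> G" if "a = Ef k" for k
    using that a assms(5) by (cases g) (auto split: if_splits)
  moreover have "Bf k \<in> G" if "a = D k" for k
    using that a assms(1,4,5) by (cases g) (auto split: if_splits)
  ultimately show ?thesis using assms(2) by (auto simp: admissible_def)
qed

lemma weight_elim:
  assumes "admissible i G" "goal_ok i g" "(\<exists>m. g = GXi m) \<or> goal_form i g \<in> G"
  shows "weight i G (body g) \<le> weight i G g + weight i G (prem i g)"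
proof (cases g)
  case (GXi m)
  then show ?thesis
    using assms(2) free_levels_pred[of m i G] by (cases "m = 0") auto
next
  case (GA k)
  then show ?thesis
    using assms(3) free_levels_le[of i G k] by (auto simp: power_increasing)
next
  case (GB k)
  then show ?thesis
    using assms(3) by (auto simp: degenerate_def)
next
  case (GE k)
  then show ?thesis
    using assms(1,3) free_levels_le[of i G "k - 1"] by (auto simp: admissible_def degenerate_def power_increasing)
qed simp_all

lemma weight_le_assm_count:
  assumes "0 < i"
  shows "wf d \<Longrightarrow> normal d \<Longrightarrow> admissible i G \<Longrightarrow> snd ` open_assms d \<subseteq> G \<Longrightarrow>
    goal_ok i g \<Longrightarrow> goal_form i g = concl d \<Longrightarrow> weight i G g \<le> assm_count (xi i) d"
proof (induction d arbitrary: G g)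
  case (Assm x h)
  then show ?case using weight_assm[OF assms] by simp
next
  case (ImpI x a d)
  show ?case
  proof (cases "weight i G g = 0")
    case False
    have g: "goal_form i g = (a \<rightarrow>\<^sub>f concl d)" using ImpI.prems(6) by simp
    have "admissible i (insert a G)"
      using admissible_intro[OF assms ImpI.prems(3,5) g] False by simp
    moreover have "snd ` open_assms d \<subseteq> insert a G" using ImpI.prems(4) by force
    ultimately have "weight i (insert a G) (body g) \<le> assm_count (xi i) d"
      using ImpI.IH ImpI.prems(1,2) goal_form_Imp[OF ImpI.prems(5) g] by simp
    then show ?thesis using weight_intro[OF ImpI.prems(3,5) g] by simp
  qed simp
next
  case (ImpE d1 d2)
  obtain b where b: "concl d2 = (concl d1 \<rightarrow>\<^sub>f b)" "concl (ImpE d1 d2) = b"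
    using ImpE.prems(1) by auto
  have d1: "wf d1" "normal d1" "snd ` open_assms d1 \<subseteq> G"
   and d2: "wf d2" "normal d2" "snd ` open_assms d2 \<subseteq> G" "\<forall>x a d'. d2 \<noteq> ImpI x a d'"
    using ImpE.prems(1,2,4) by auto
  obtain x h where "(x, h) \<in> open_assms d2" "tail h (concl d2)"
    using normal_concl_tail[OF d2(1,2,4)] by auto
  then have "h \<in> G" "tail h (concl d1 \<rightarrow>\<^sub>f b)" using d2(3) b(1) by force+
  then obtain g' where g': "goal_ok i g'" "goal_form i g' = (concl d1 \<rightarrow>\<^sub>f b)"
      "(\<exists>m. g' = GXi m) \<or> goal_form i g' \<in> G"
    using major_premise_goal[OF ImpE.prems(3)] by metis
  note parts = goal_form_Imp[OF g'(1,2)]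
  have "g = body g'" using goal_form_inj[OF ImpE.prems(5)] parts ImpE.prems(6) b(2) by simp
  then have "weight i G g \<le> weight i G g' + weight i G (prem i g')"
    using weight_elim[OF ImpE.prems(3) g'(1,3)] by simp
  also have "\<dots> \<le> assm_count (xi i) d2 + assm_count (xi i) d1"
    using ImpE.IH ImpE.prems(3) d1 d2 g' parts b(1) by (intro add_mono) simp_all
  finally show ?case by simp
qed

theorem mainTheorem1:
  fixes i :: nat and d :: deriv
  assumes "i > 0" and "is_proof_of d (phi i)" and "normal d"
  shows "2 ^ i \<le> assm_count (xi i) d"
proof -
  have d: "wf d" "open_assms d = {}" "concl d = phi i"
    using assms(2) by (auto simp: is_proof_of_def)
  have "weight i {} GPhi \<le> assm_count (xi i) d"
    by (rule weight_le_assm_count[OF assms(1) d(1) assms(3)]) (simp_all add: admissible_def d)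
  moreover have "weight i {} GPhi = 2 ^ i" by (simp add: degenerate_def free_levels_empty)
  ultimately show ?thesis by simp
qed

end
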